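(* Let $\kappa\in\mathbb{N}$, $\eta\in\{2,3,\ldots\}\cup\{\infty\}$ and let $\pmb{\lambda}=\{\lambda_{-k}\}_{k=0}^{\kappa-1}\cup\{\lambda_{i,j}\}_{i,j=1}^{\eta,\infty}\subset(0,\infty)$ with $\lambda_{i,j}>1$ for $i\in\mathbb{N}\cap[1,\eta]$, $j\ge2$. If the weighted shift $S_{\pmb{\lambda}}\in\mathbf{B}(\ell^2(V_{\eta,\kappa}))$ is completely hyperexpansive and $r$-generation flat for some $r\ge3$, then $S_{\pmb{\lambda}}$ is $2$-generation flat.
   Context: $\mathcal{T}_{\eta,\kappa}$ is the directed tree with vertices $V_{\eta,\kappa}=\{-k:k\in\mathbb{N}\cap[0,\kappa]\}\sqcup\{(i,j):i\in\mathbb{N}\cap[1,\eta],j\ge1\}$ and edges $(-k,-k+1)$ ($1\le k\le\kappa$), $(0,(i,1))$, $((i,j),(i,j+1))$; the weighted shift with weights $\pmb{\lambda}$ is the bounded operator $S_{\pmb{\lambda}}e_v=\sum_{u\text{ child of }v}\lambda_ue_u$ (weight $\lambda_{-k}$ sits at vertex $-k$, $\lambda_{i,j}$ at $(i,j)$). $S_{\pmb{\lambda}}$ is $r$-generation flat if $\lambda_{i,j}=\lambda_{1,j}$ for all $j\ge r$ and $i\in\mathbb{N}\cap[1,\eta]$. A real sequence $(a_k)_{k\ge0}$ is completely alternating if $\sum_{k=0}^n(-1)^k\binom nk a_{k+m}\le0$ for all $m\ge0,n\ge1$; an operator $T$ is completely hyperexpansive if $(\|T^nf\|^2)_{n\ge0}$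 is completely alternating for every vector $f$. *)

theory Defs
  imports "HOL-Analysis.Analysis" "HOL-Library.Extended_Nat"
begin

text \<open>Vertices of the directed tree T_{eta,kappa}: Neg k stands for the vertex -k,
  Br i j stands for the vertex (i,j).\<close>
datatype vtx = Neg nat | Br nat nat

definition tree_verts :: "enat \<Rightarrow> nat \<Rightarrow> vtx set" where
  "tree_verts \<eta> \<kappa> = {Neg k | k. k \<le> \<kappa>} \<union> {Br i j | i j. 1 \<le> i \<and> enat i \<le> \<eta> \<and> 1 \<le> j}"

text \<open>Parent map (only meaningful on non-root vertices; the root is Neg kappa).\<close>
fun parent :: "vtx \<Rightarrow> vtx" where
  "parent (Neg k) = Neg (Suc k)"
| "parent (Br i 0) = Br i 0"
| "parent (Br i (Suc 0)) = Neg 0"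
| "parent (Br i (Suc (Suc j))) = Br i (Suc j)"

definition l2 :: "vtx set \<Rightarrow> (vtx \<Rightarrow> complex) set" where
  "l2 V = {f. (\<forall>v. v \<notin> V \<longrightarrow> f v = 0) \<and> (\<lambda>v. (cmod (f v))\<^sup>2) summable_on V}"

definition l2_norm_sq :: "vtx set \<Rightarrow> (vtx \<Rightarrow> complex) \<Rightarrow> real" where
  "l2_norm_sq V f = infsum (\<lambda>v. (cmod (f v))\<^sup>2) V"

text \<open>Weighted shift: (S f)(v) = lambda_v f(parent v) for non-root v, i.e.
  S e_w = sum over children u of w of lambda_u e_u.\<close>
definition wshift :: "enat \<Rightarrow> nat \<Rightarrow> (vtx \<Rightarrow> real) \<Rightarrow> (vtx \<Rightarrow> complex) \<Rightarrow> (vtx \<Rightarrow> complex)" where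
  "wshift \<eta> \<kappa> lam f = (\<lambda>v. if v \<in> tree_verts \<eta> \<kappa> \<and> v \<noteq> Neg \<kappa>
                              then complex_of_real (lam v) * f (parent v) else 0)"

definition wshift_bounded :: "enat \<Rightarrow> nat \<Rightarrow> (vtx \<Rightarrow> real) \<Rightarrow> bool" where
  "wshift_bounded \<eta> \<kappa> lam \<longleftrightarrow> (\<exists>C. \<forall>f \<in> l2 (tree_verts \<eta> \<kappa>).
      wshift \<eta> \<kappa> lam f \<in> l2 (tree_verts \<eta> \<kappa>) \<and>
      l2_norm_sq (tree_verts \<eta> \<kappa>) (wshift \<eta> \<kappa> lam f) \<le> C * l2_norm_sq (tree_verts \<eta> \<kappa>) f)"

definition completely_alternating :: "(nat \<Rightarrow> real) \<Rightarrow> bool" where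
  "completely_alternating a \<longleftrightarrow>
     (\<forall>m n. n \<ge> 1 \<longrightarrow> (\<Sum>k\<le>n. (-1)^k * real (n choose k) * a (k + m)) \<le> 0)"

definition completely_hyperexpansive :: "enat \<Rightarrow> nat \<Rightarrow> (vtx \<Rightarrow> real) \<Rightarrow> bool" where
  "completely_hyperexpansive \<eta> \<kappa> lam \<longleftrightarrow>
     (\<forall>f \<in> l2 (tree_verts \<eta> \<kappa>).
        completely_alternating (\<lambda>n. l2_norm_sq (tree_verts \<eta> \<kappa>) ((wshift \<eta> \<kappa> lam ^^ n) f)))"

definition generation_flat :: "enat \<Rightarrow> (vtx \<Rightarrow> real) \<Rightarrow> nat \<Rightarrow> bool" where
  "generation_flat \<eta> lam r \<longleftrightarrow>
     (\<forall>i j. 1 \<le> i \<and> enat i \<le> \<eta> \<and> j \<ge> r \<longrightarrow> lam (Br i j) = lam (Br 1 j))"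

end

theory Submission
  imports Defs
begin

text \<open>
  Write \<open>alt_diff a n m\<close> for \<open>((I - E)^n a)(m)\<close>, E the left shift. For a completely
  alternating sequence these values are nonpositive for \<open>n \<ge> 1\<close>, so \<open>alt_diff a n 0\<close> increases in
  \<open>n \<ge> 1\<close> and converges, and consequently \<open>alt_diff a n m \<longlonglongrightarrow> 0\<close> for every \<open>m \<ge> 1\<close>.

  The moments \<open>A i n = \<parallel>S^n e(i,1)\<parallel>^2\<close> of the branches are completely alternating, and
  \<open>\<parallel>S^(n+1) e(0)\<parallel>^2 = (\<Sum>i. \<lambda>(i,1)^2 * A i n)\<close>. So each \<open>- alt_diff (A i) n 0\<close> is dominated by
  the corresponding difference of the moments of \<open>e(0)\<close> at \<open>m = 1\<close> and tends to 0 as well.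
  Flatness from generation \<open>r\<close> on makes \<open>A i\<close> and \<open>A 1\<close> eventually proportional, \<open>A i = C * A 1\<close>.
  All differences of \<open>u = A i - C * A 1\<close> tend to 0 and \<open>u\<close> vanishes eventually; if \<open>u\<close> vanishes
  beyond \<open>m\<close> then \<open>alt_diff u n m = u m\<close>, so \<open>u = 0\<close> by downward induction. As \<open>A i 0 = A 1 0 = 1\<close>,
  \<open>A i = A 1\<close>, and quotients of consecutive moments give \<open>\<lambda>(i,j) = \<lambda>(1,j)\<close> for \<open>j \<ge> 2\<close>.
\<close>

definition alt_diff :: "(nat \<Rightarrow> real) \<Rightarrow> nat \<Rightarrow> nat \<Rightarrow> real" where
  "alt_diff a n m = (\<Sum>k\<le>n. (-1)^k * real (n choose k) * a (k + m))"

lemma alt_diff_Suc: "alt_diff a (Suc n) m = alt_diff a n m - alt_diff a n (Suc m)"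
proof -
  have "alt_diff a (Suc n) m =
      a m + (\<Sum>k\<le>n. (-1)^(Suc k) * real (n choose Suc k) * a (Suc k + m))
          - (\<Sum>k\<le>n. (-1)^k * real (n choose k) * a (k + Suc m))"
    unfolding alt_diff_def
    by (subst sum.atMost_Suc_shift) (simp add: sum.distrib algebra_simps sum_subtractf sum_negf)
  also have "a m + (\<Sum>k\<le>n. (-1)^(Suc k) * real (n choose Suc k) * a (Suc k + m))
      = (\<Sum>k\<le>Suc n. (-1)^k * real (n choose k) * a (k + m))"
    by (subst sum.atMost_Suc_shift) simp
  also have "\<dots> = alt_diff a n m"
    by (simp add: alt_diff_def)
  finally show ?thesis by (simp add: alt_diff_def)
qed

lemma alt_diff_diff: "alt_diff (\<lambda>k. a k - b k) n m = alt_diff a n m - alt_diff b n m"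
  by (simp add: alt_diff_def algebra_simps sum_subtractf)

lemma alt_diff_cmult: "alt_diff (\<lambda>k. c * a k) n m = c * alt_diff a n m"
  by (simp add: alt_diff_def algebra_simps sum_distrib_left)

lemma alt_diff_shift: "alt_diff (\<lambda>k. a (Suc k)) n m = alt_diff a n (Suc m)"
  by (simp add: alt_diff_def)

lemma alt_diff_nonpos:
  "completely_alternating a \<Longrightarrow> 1 \<le> n \<Longrightarrow> alt_diff a n m \<le> 0"
  unfolding completely_alternating_def alt_diff_def by blast

lemma has_sum_sum:
  fixes f :: "'i \<Rightarrow> 'a \<Rightarrow> 'b::topological_comm_monoid_add"
  assumes "finite J" "\<And>j. j \<in> J \<Longrightarrow> (f j has_sum s j) A"
  shows "((\<lambda>x. \<Sum>j\<in>J. f j x) has_sum (\<Sum>j\<in>J. s j)) A"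
  using assms by (induction J rule: finite_induct) (simp_all add: has_sum_add)

lemma has_sum_alt_diff:
  assumes "\<And>j. ((\<lambda>i. f i j) has_sum s j) I"
  shows "((\<lambda>i. alt_diff (f i) n m) has_sum alt_diff s n m) I"
  unfolding alt_diff_def by (intro has_sum_sum has_sum_cmult_right assms) simp

lemma alt_diff_shift_tendsto_zero:
  assumes "convergent (\<lambda>n. alt_diff a n m)"
  shows "(\<lambda>n. alt_diff a n (Suc m)) \<longlonglongrightarrow> 0"
proof -
  obtain L where L: "(\<lambda>n. alt_diff a n m) \<longlonglongrightarrow> L"
    using assms by (auto simp: convergent_def)
  have "(\<lambda>n. alt_diff a n m - alt_diff a (Suc n) m) \<longlonglongrightarrow> L - L"
    by (intro tendsto_diff L LIMSEQ_Suc[OF L])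
  then show ?thesis by (simp add: alt_diff_Suc)
qed

lemma convergent_alt_diff_0:
  assumes "completely_alternating a"
  shows "convergent (\<lambda>n. alt_diff a n 0)"
proof -
  have "incseq (\<lambda>n. alt_diff a (Suc n) 0)"
    by (rule incseq_SucI) (simp add: alt_diff_Suc[of a "Suc _"] alt_diff_nonpos[OF assms])
  moreover have "alt_diff a (Suc n) 0 \<le> 0" for n
    using alt_diff_nonpos[OF assms] by simp
  ultimately have "convergent (\<lambda>n. alt_diff a (Suc n) 0)"
    by (meson incseq_convergent convergentI)
  then show ?thesis by (rule iffD1[OF convergent_Suc_iff])
qed

lemma alt_diff_Suc_tendsto_zero:
  assumes "completely_alternating a"
  shows "(\<lambda>n. alt_diff a n (Suc m)) \<longlonglongrightarrow> 0"
proof (induction m)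
  case 0
  show ?case by (rule alt_diff_shift_tendsto_zero[OF convergent_alt_diff_0[OF assms]])
next
  case (Suc m)
  then show ?case by (intro alt_diff_shift_tendsto_zero convergentI)
qed

lemma alt_diff_summand_tendsto_zero:
  assumes s: "completely_alternating s"
    and has_sum: "\<And>j. ((\<lambda>i. c i * A i j) has_sum s (Suc j)) I"
    and A: "\<And>i. i \<in> I \<Longrightarrow> completely_alternating (A i)"
    and c: "\<And>i. i \<in> I \<Longrightarrow> c i > 0"
    and i: "i \<in> I"
  shows "(\<lambda>n. alt_diff (A i) n 0) \<longlonglongrightarrow> 0"
proof (rule tendsto_sandwich)
  have "((\<lambda>i'. alt_diff (\<lambda>j. c i' * A i' j) n 0) has_sum alt_diff (\<lambda>j. s (Suc j)) n 0) I" for n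
    by (rule has_sum_alt_diff[OF has_sum])
  then have sum: "((\<lambda>i'. - (c i' * alt_diff (A i') n 0)) has_sum - alt_diff s n 1) I" for n
    by (intro has_sum_uminusI) (simp add: alt_diff_cmult alt_diff_shift)
  have nonneg: "0 \<le> - (c i' * alt_diff (A i') n 0)" if "i' \<in> I" "1 \<le> n" for i' n
    using c[OF that(1)] alt_diff_nonpos[OF A[OF that(1)] that(2)]
    by (simp add: mult_nonneg_nonpos)
  have "(\<Sum>i'\<in>{i}. - (c i' * alt_diff (A i') n 0)) \<le> - alt_diff s n 1" if "1 \<le> n" for n
    by (rule finite_sum_le_has_sum[OF sum]) (use i that nonneg in auto)
  then show "\<forall>\<^sub>F n in sequentially. alt_diff s n 1 / c i \<le> alt_diff (A i) n 0"
    using c[OF i] by (auto simp: eventually_sequentially field_simps)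
  show "\<forall>\<^sub>F n in sequentially. alt_diff (A i) n 0 \<le> 0"
    using alt_diff_nonpos[OF A[OF i]] by (auto simp: eventually_sequentially)
  show "(\<lambda>n. alt_diff s n 1 / c i) \<longlonglongrightarrow> 0"
    using tendsto_divide_zero[OF alt_diff_Suc_tendsto_zero[OF s, of 0]] by simp
qed simp

lemma alt_diff_eq_if_vanishing_beyond:
  assumes "\<And>k. m < k \<Longrightarrow> u k = 0"
  shows "alt_diff u n m = u m"
proof -
  have "alt_diff u n m = (\<Sum>k\<le>n. if k = 0 then u m else 0)"
    unfolding alt_diff_def by (rule sum.cong) (auto simp: assms)
  then show ?thesis by simp
qed

lemma eq_zero_if_alt_diff_tendsto_zero:
  assumes lim: "\<And>m. (\<lambda>n. alt_diff u n m) \<longlonglongrightarrow> 0"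
    and eventually_zero: "\<And>k. N \<le> k \<Longrightarrow> u k = 0"
  shows "u m = 0"
proof -
  have "\<forall>k\<ge>0. u k = 0"
  proof (rule inc_induct[of 0 N])
    show "\<forall>k\<ge>N. u k = 0" using eventually_zero by blast
  next
    fix m assume "\<forall>k\<ge>Suc m. u k = 0"
    then have "alt_diff u n m = u m" for n
      by (intro alt_diff_eq_if_vanishing_beyond) simp
    then have "u m = 0"
      using lim[of m] by (simp add: LIMSEQ_const_iff)
    with \<open>\<forall>k\<ge>Suc m. u k = 0\<close> show "\<forall>k\<ge>m. u k = 0"
      by (metis Suc_leI le_neq_implies_less)
  qed simp
  then show ?thesis by simp
qed

lemma proportional_if_eventually_proportional:
  assumes x: "completely_alternating x" and y: "completely_alternating y"
    and lim_x: "(\<lambda>n. alt_diff x n 0) \<longlonglongrightarrow> 0" and lim_y: "(\<lambda>n. alt_diff y n 0) \<longlonglongrightarrow> 0"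
    and eventually_proportional: "\<And>k. N \<le> k \<Longrightarrow> x k = C * y k"
  shows "x k = C * y k"
proof -
  have "(\<lambda>n. alt_diff (\<lambda>k. x k - C * y k) n m) \<longlonglongrightarrow> 0" for m
  proof -
    have "(\<lambda>n. alt_diff x n m - C * alt_diff y n m) \<longlonglongrightarrow> 0 - C * 0"
    proof (cases m)
      case 0
      show ?thesis unfolding 0 by (intro tendsto_intros lim_x lim_y)
    next
      case (Suc m')
      show ?thesis unfolding Suc by (intro tendsto_intros alt_diff_Suc_tendsto_zero x y)
    qed
    then show ?thesis by (simp add: alt_diff_diff alt_diff_cmult)
  qed
  then have "x k - C * y k = 0"
    by (rule eq_zero_if_alt_diff_tendsto_zero[where N = N]) (simp add: eventually_proportional)
  then show ?thesis by simp
qed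

lemma Br_in_tree_verts [simp]: "Br i j \<in> tree_verts \<eta> \<kappa> \<longleftrightarrow> 1 \<le> i \<and> enat i \<le> \<eta> \<and> 1 \<le> j"
  unfolding tree_verts_def by auto

lemma Neg_in_tree_verts [simp]: "Neg k \<in> tree_verts \<eta> \<kappa> \<longleftrightarrow> k \<le> \<kappa>"
  unfolding tree_verts_def by auto

lemma wshift_Neg [simp]:
  "wshift \<eta> \<kappa> lam f (Neg k) = (if k < \<kappa> then lam (Neg k) * f (Neg (Suc k)) else 0)"
  by (auto simp: wshift_def)

lemma wshift_Br_0 [simp]: "wshift \<eta> \<kappa> lam f (Br i 0) = 0"
  by (simp add: wshift_def)

lemma wshift_Br_1 [simp]:
  "wshift \<eta> \<kappa> lam f (Br i (Suc 0)) = (if 1 \<le> i \<and> enat i \<le> \<eta> then lam (Br i 1) * f (Neg 0) else 0)"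
  by (simp add: wshift_def)

lemma wshift_Br_Suc_Suc [simp]:
  "wshift \<eta> \<kappa> lam f (Br i (Suc (Suc j))) =
    (if 1 \<le> i \<and> enat i \<le> \<eta> then lam (Br i (Suc (Suc j))) * f (Br i (Suc j)) else 0)"
  by (simp add: wshift_def)

lemma vtx_cases_by_generation:
  obtains k where "w = Neg k" | i where "w = Br i 0" | i where "w = Br i (Suc 0)"
    | i j where "w = Br i (Suc (Suc j))"
  by (metis vtx.exhaust not0_implies_Suc)

definition unit_vec :: "vtx \<Rightarrow> vtx \<Rightarrow> complex" where
  "unit_vec v = (\<lambda>w. if w = v then 1 else 0)"

lemma unit_vec_in_l2: "v \<in> V \<Longrightarrow> unit_vec v \<in> l2 V"
  and l2_norm_sq_scaled_unit_vec: "v \<in> V \<Longrightarrow> l2_norm_sq V (\<lambda>w. c * unit_vec v w) = (cmod c)\<^sup>2"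
proof -
  assume "v \<in> V"
  then have "((\<lambda>w. (cmod (c * unit_vec v w))\<^sup>2) has_sum (cmod c)\<^sup>2) V" for c
    by (intro has_sum_finite_neutralI[of "{v}"]) (auto simp: unit_vec_def)
  from this[of 1] this[of c] \<open>v \<in> V\<close> show "unit_vec v \<in> l2 V" "l2_norm_sq V (\<lambda>w. c * unit_vec v w) = (cmod c)\<^sup>2"
    unfolding l2_def l2_norm_sq_def by (auto simp: unit_vec_def has_sum_iff)
qed

lemma wshift_iter_in_l2:
  assumes "wshift_bounded \<eta> \<kappa> lam" "f \<in> l2 (tree_verts \<eta> \<kappa>)"
  shows "(wshift \<eta> \<kappa> lam ^^ n) f \<in> l2 (tree_verts \<eta> \<kappa>)"
proof (induction n)
  case 0
  then show ?case using assms(2) by simp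
next
  case (Suc n)
  then show ?case using assms(1) unfolding wshift_bounded_def by auto
qed

lemma wshift_iter_unit_vec_Br:
  assumes "1 \<le> i" "enat i \<le> \<eta>"
  shows "(wshift \<eta> \<kappa> lam ^^ n) (unit_vec (Br i 1)) =
    (\<lambda>w. of_real (\<Prod>l\<in>{2..Suc n}. lam (Br i l)) * unit_vec (Br i (Suc n)) w)"
proof (induction n)
  case 0
  show ?case by (simp add: unit_vec_def)
next
  case (Suc n)
  show ?case
  proof (rule ext)
    fix w
    have "(wshift \<eta> \<kappa> lam ^^ Suc n) (unit_vec (Br i 1)) w =
        wshift \<eta> \<kappa> lam ((wshift \<eta> \<kappa> lam ^^ n) (unit_vec (Br i 1))) w"
      by simp
    also have "\<dots> = of_real (\<Prod>l\<in>{2..Suc (Suc n)}. lam (Br i l)) * unit_vec (Br i (Suc (Suc n))) w"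
      unfolding Suc.IH by (cases w rule: vtx_cases_by_generation)
        (use assms in \<open>auto simp: unit_vec_def prod.nat_ivl_Suc'\<close>)
    finally show "(wshift \<eta> \<kappa> lam ^^ Suc n) (unit_vec (Br i 1)) w =
        of_real (\<Prod>l\<in>{2..Suc (Suc n)}. lam (Br i l)) * unit_vec (Br i (Suc (Suc n))) w" .
  qed
qed

lemma wshift_iter_unit_vec_Neg_0:
  "(wshift \<eta> \<kappa> lam ^^ Suc n) (unit_vec (Neg 0)) w =
    (case w of Neg k \<Rightarrow> 0 | Br i j \<Rightarrow> if j = Suc n \<and> 1 \<le> i \<and> enat i \<le> \<eta>
        then of_real (\<Prod>l\<in>{1..Suc n}. lam (Br i l)) else 0)"
proof (induction n arbitrary: w)
  case 0
  show ?case by (cases w rule: vtx_cases_by_generation) (auto simp: unit_vec_def)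
next
  case (Suc n)
  have "(wshift \<eta> \<kappa> lam ^^ Suc (Suc n)) (unit_vec (Neg 0)) w =
      wshift \<eta> \<kappa> lam ((wshift \<eta> \<kappa> lam ^^ Suc n) (unit_vec (Neg 0))) w"
    by simp
  also have "\<dots> = (case w of Neg k \<Rightarrow> 0 | Br i j \<Rightarrow> if j = Suc (Suc n) \<and> 1 \<le> i \<and> enat i \<le> \<eta>
        then of_real (\<Prod>l\<in>{1..Suc (Suc n)}. lam (Br i l)) else 0)"
    by (cases w rule: vtx_cases_by_generation)
      (auto simp: Suc.IH prod.nat_ivl_Suc' simp del: funpow.simps)
  finally show ?case .
qed

definition branch_moment :: "(vtx \<Rightarrow> real) \<Rightarrow> nat \<Rightarrow> nat \<Rightarrow> real" where
  "branch_moment lam i n = (\<Prod>l\<in>{2..Suc n}. lam (Br i l))\<^sup>2"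

lemma branch_moment_0 [simp]: "branch_moment lam i 0 = 1"
  by (simp add: branch_moment_def)

lemma branch_moment_Suc: "branch_moment lam i (Suc n) = branch_moment lam i n * (lam (Br i (Suc (Suc n))))\<^sup>2"
  by (simp add: branch_moment_def prod.nat_ivl_Suc' power_mult_distrib)

lemma branch_moment_pos:
  assumes "\<And>l. 2 \<le> l \<Longrightarrow> lam (Br i l) > 0"
  shows "branch_moment lam i n > 0"
proof -
  have "(\<Prod>l\<in>{2..Suc n}. lam (Br i l)) > 0"
    by (rule prod_pos) (use assms in auto)
  then show ?thesis by (simp add: branch_moment_def)
qed

lemma l2_norm_sq_wshift_iter_unit_vec_Br:
  assumes "1 \<le> i" "enat i \<le> \<eta>"
  shows "l2_norm_sq (tree_verts \<eta> \<kappa>) ((wshift \<eta> \<kappa> lam ^^ n) (unit_vec (Br i 1))) = branch_moment lam i n"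
proof -
  have "Br i (Suc n) \<in> tree_verts \<eta> \<kappa>"
    using assms by simp
  then show ?thesis
    unfolding wshift_iter_unit_vec_Br[OF assms] branch_moment_def
    by (simp only: l2_norm_sq_scaled_unit_vec norm_of_real power2_abs)
qed

lemma completely_alternating_branch_moment:
  assumes "completely_hyperexpansive \<eta> \<kappa> lam" "1 \<le> i" "enat i \<le> \<eta>"
  shows "completely_alternating (branch_moment lam i)"
proof -
  have "unit_vec (Br i 1) \<in> l2 (tree_verts \<eta> \<kappa>)"
    using assms by (intro unit_vec_in_l2) simp
  with assms(1) have "completely_alternating
      (\<lambda>n. l2_norm_sq (tree_verts \<eta> \<kappa>) ((wshift \<eta> \<kappa> lam ^^ n) (unit_vec (Br i 1))))"
    unfolding completely_hyperexpansive_def by blast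
  then show ?thesis
    unfolding l2_norm_sq_wshift_iter_unit_vec_Br[OF assms(2,3)] .
qed

lemma has_sum_l2_norm_sq_wshift_iter_unit_vec_Neg_0:
  assumes "wshift_bounded \<eta> \<kappa> lam"
  shows "((\<lambda>i. (lam (Br i 1))\<^sup>2 * branch_moment lam i n) has_sum
      l2_norm_sq (tree_verts \<eta> \<kappa>) ((wshift \<eta> \<kappa> lam ^^ Suc n) (unit_vec (Neg 0))))
      {i. 1 \<le> i \<and> enat i \<le> \<eta>}"
proof -
  let ?V = "tree_verts \<eta> \<kappa>" and ?I = "{i. 1 \<le> i \<and> enat i \<le> \<eta>}"
  let ?g = "(wshift \<eta> \<kappa> lam ^^ Suc n) (unit_vec (Neg 0))"
  let ?h = "\<lambda>v. (cmod (?g v))\<^sup>2" and ?B = "\<lambda>i. Br i (Suc n)"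
  have "?g \<in> l2 ?V"
    using assms by (intro wshift_iter_in_l2 unit_vec_in_l2) simp_all
  then have "(?h has_sum l2_norm_sq ?V ?g) ?V"
    unfolding l2_def l2_norm_sq_def by (simp add: summable_iff_has_sum_infsum)
  also have "?this \<longleftrightarrow> (?h has_sum l2_norm_sq ?V ?g) (?B ` ?I)"
  proof (rule has_sum_cong_neutral)
    fix x assume "x \<in> ?V - ?B ` ?I"
    then show "?h x = 0"
      by (cases x) (auto simp: wshift_iter_unit_vec_Neg_0 simp del: funpow.simps)
  qed auto
  also have "\<dots> \<longleftrightarrow> ((?h \<circ> ?B) has_sum l2_norm_sq ?V ?g) ?I"
    by (rule has_sum_reindex) (auto simp: inj_on_def)
  also have "\<dots> \<longleftrightarrow> ((\<lambda>i. (lam (Br i 1))\<^sup>2 * branch_moment lam i n) has_sum l2_norm_sq ?V ?g) ?I"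
  proof (rule has_sum_cong)
    fix i assume "i \<in> ?I"
    then have "?g (?B i) = of_real (\<Prod>l\<in>{1..Suc n}. lam (Br i l))"
      by (simp add: wshift_iter_unit_vec_Neg_0 del: funpow.simps)
    then have "(?h \<circ> ?B) i = (\<Prod>l\<in>{1..Suc n}. lam (Br i l))\<^sup>2"
      by (simp only: comp_def norm_of_real power2_abs)
    also have "\<dots> = (lam (Br i 1))\<^sup>2 * branch_moment lam i n"
      by (simp add: branch_moment_def prod.atLeast_Suc_atMost power_mult_distrib numeral_2_eq_2)
    finally show "(?h \<circ> ?B) i = (lam (Br i 1))\<^sup>2 * branch_moment lam i n" .
  qed
  finally show ?thesis .
qed

lemma branch_moment_eventually_proportional:
  assumes flat: "\<And>j. N \<le> j \<Longrightarrow> lam (Br i j) = lam (Br i' j)"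
    and nonzero: "branch_moment lam i' N \<noteq> 0"
    and "N \<le> n"
  shows "branch_moment lam i n = branch_moment lam i N / branch_moment lam i' N * branch_moment lam i' n"
  using \<open>N \<le> n\<close>
proof (induction n rule: dec_induct)
  case base
  then show ?case using nonzero by simp
next
  case (step n)
  then show ?case by (simp add: branch_moment_Suc flat)
qed

lemma alt_diff_branch_moment_tendsto_zero:
  assumes bdd: "wshift_bounded \<eta> \<kappa> lam" and CH: "completely_hyperexpansive \<eta> \<kappa> lam"
    and first_gen: "\<And>i. 1 \<le> i \<Longrightarrow> enat i \<le> \<eta> \<Longrightarrow> lam (Br i 1) \<noteq> 0"
    and "1 \<le> i" "enat i \<le> \<eta>"
  shows "(\<lambda>n. alt_diff (branch_moment lam i) n 0) \<longlonglongrightarrow> 0"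
proof (rule alt_diff_summand_tendsto_zero[where c = "\<lambda>i. (lam (Br i 1))\<^sup>2"])
  show "completely_alternating (\<lambda>n. l2_norm_sq (tree_verts \<eta> \<kappa>) ((wshift \<eta> \<kappa> lam ^^ n) (unit_vec (Neg 0))))"
    using CH unit_vec_in_l2[of "Neg 0"] by (simp add: completely_hyperexpansive_def)
  show "((\<lambda>i. (lam (Br i 1))\<^sup>2 * branch_moment lam i j) has_sum
      l2_norm_sq (tree_verts \<eta> \<kappa>) ((wshift \<eta> \<kappa> lam ^^ Suc j) (unit_vec (Neg 0))))
      {i. 1 \<le> i \<and> enat i \<le> \<eta>}" for j
    by (rule has_sum_l2_norm_sq_wshift_iter_unit_vec_Neg_0[OF bdd])
  show "completely_alternating (branch_moment lam i')" if "i' \<in> {i. 1 \<le> i \<and> enat i \<le> \<eta>}" for i'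
    using that by (intro completely_alternating_branch_moment[OF CH]) simp_all
  show "(lam (Br i' 1))\<^sup>2 > 0" if "i' \<in> {i. 1 \<le> i \<and> enat i \<le> \<eta>}" for i'
    using that first_gen by simp
qed (use assms in simp)

lemma branch_moments_eq_if_eventually_flat:
  assumes bdd: "wshift_bounded \<eta> \<kappa> lam" and CH: "completely_hyperexpansive \<eta> \<kappa> lam"
    and pos: "\<And>i j. 1 \<le> i \<Longrightarrow> enat i \<le> \<eta> \<Longrightarrow> 1 \<le> j \<Longrightarrow> lam (Br i j) > 0"
    and i: "1 \<le> i" "enat i \<le> \<eta>" and i': "1 \<le> i'" "enat i' \<le> \<eta>"
    and flat: "\<And>j. N \<le> j \<Longrightarrow> lam (Br i j) = lam (Br i' j)"
  shows "branch_moment lam i n = branch_moment lam i' n"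
proof -
  have first_gen: "\<And>i. 1 \<le> i \<Longrightarrow> enat i \<le> \<eta> \<Longrightarrow> lam (Br i 1) \<noteq> 0"
    using pos by (metis less_irrefl order_refl)
  have "branch_moment lam i' N \<noteq> 0"
    using i' pos by (intro less_imp_neq[symmetric] branch_moment_pos) simp
  define C where "C = branch_moment lam i N / branch_moment lam i' N"
  have "branch_moment lam i k = C * branch_moment lam i' k" for k
  proof (rule proportional_if_eventually_proportional)
    show "\<And>k. N \<le> k \<Longrightarrow> branch_moment lam i k = C * branch_moment lam i' k"
      unfolding C_def using flat \<open>branch_moment lam i' N \<noteq> 0\<close> by (rule branch_moment_eventually_proportional)
    show "completely_alternating (branch_moment lam i)" "completely_alternating (branch_moment lam i')"
      using i i' by (intro completely_alternating_branch_moment[OF CH]; simp)+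
    show "(\<lambda>n. alt_diff (branch_moment lam i) n 0) \<longlonglongrightarrow> 0"
      "(\<lambda>n. alt_diff (branch_moment lam i') n 0) \<longlonglongrightarrow> 0"
      using i i' by (intro alt_diff_branch_moment_tendsto_zero[OF bdd CH first_gen]; simp)+
  qed
  moreover from this[of 0] have "C = 1" by simp
  ultimately show ?thesis by simp
qed

lemma branch_weight_eq_if_branch_moments_eq:
  assumes moments: "\<And>n. branch_moment lam i n = branch_moment lam i' n"
    and pos: "\<And>l. 2 \<le> l \<Longrightarrow> lam (Br i l) > 0" "\<And>l. 2 \<le> l \<Longrightarrow> lam (Br i' l) > 0"
    and "2 \<le> j"
  shows "lam (Br i j) = lam (Br i' j)"
proof -
  obtain n where j: "j = Suc (Suc n)"
    using \<open>2 \<le> j\<close> by (metis add_2_eq_Suc le_Suc_ex)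
  have "branch_moment lam i n * (lam (Br i j))\<^sup>2 = branch_moment lam i n * (lam (Br i' j))\<^sup>2"
    using moments[of "Suc n"] moments[of n] by (simp add: branch_moment_Suc j)
  then have "(lam (Br i j))\<^sup>2 = (lam (Br i' j))\<^sup>2"
    using branch_moment_pos[of lam i n, OF pos(1)] by simp
  then show ?thesis
    using pos \<open>2 \<le> j\<close> by (simp add: power2_eq_iff_nonneg less_imp_le)
qed

theorem theorem9p3:
  fixes \<kappa> :: nat and \<eta> :: enat and lam :: "vtx \<Rightarrow> real" and r :: nat
  assumes eta: "\<eta> \<ge> 2"
    and pos_neg: "\<And>k. k < \<kappa> \<Longrightarrow> lam (Neg k) > 0"
    and pos_br: "\<And>i j. 1 \<le> i \<Longrightarrow> enat i \<le> \<eta> \<Longrightarrow> 1 \<le> j \<Longrightarrow> lam (Br i j) > 0"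
    and gt1: "\<And>i j. 1 \<le> i \<Longrightarrow> enat i \<le> \<eta> \<Longrightarrow> 2 \<le> j \<Longrightarrow> lam (Br i j) > 1"
    and bdd: "wshift_bounded \<eta> \<kappa> lam"
    and CH: "completely_hyperexpansive \<eta> \<kappa> lam"
    and r: "r \<ge> 3"
    and flat: "generation_flat \<eta> lam r"
  shows "generation_flat \<eta> lam 2"
  unfolding generation_flat_def
proof (intro allI impI)
  fix i j :: nat
  assume ij: "1 \<le> i \<and> enat i \<le> \<eta> \<and> 2 \<le> j"
  have one: "enat 1 \<le> \<eta>"
    using eta by (metis enat_ord_simps(1) one_le_numeral order_trans numeral_eq_enat)
  have flat_i: "lam (Br i l) = lam (Br 1 l)" if "r \<le> l" for l
    using flat ij that unfolding generation_flat_def by blast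
  have "branch_moment lam i n = branch_moment lam 1 n" for n
    using ij by (intro branch_moments_eq_if_eventually_flat[OF bdd CH pos_br _ _ order_refl one flat_i]) simp_all
  moreover have "lam (Br i' l) > 0" if "1 \<le> i'" "enat i' \<le> \<eta>" "2 \<le> l" for i' l
    using pos_br that by simp
  ultimately show "lam (Br i j) = lam (Br 1 j)"
    using ij one by (intro branch_weight_eq_if_branch_moments_eq) simp_all
qed

end
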